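(* Assume $\Phi_0>0$, let $\gamma>1$ and $\tau>0$, and let $C$ be the set of $\tau$-cheap edges. If $F\subseteq E$ is an $r$-edge-cover with $\tau\ge\ell_F(B)$, then $\Phi(C\cap F)\le\Phi_0/\gamma$.
   Context: Bipartite Activation Edge-Multicover setting: a bipartite multigraph $G=(A\cup B,E)$, each edge $e=ab$ ($a\in A$, $b\in B$) with non-negative activation costs $c_e^a,c_e^b$, and non-negative integer requirements $r_b$ for $b\in B$. For $J\subseteq E$, $\delta_J(v)$ is the set of edges of $J$ at $v$, $\deg_J(v)=|\delta_J(v)|$, $\ell_J(v)=\max\{c_e^v:e\in\delta_J(v)\}$ ($0$ if empty), $\ell_J(U)=\sum_{v\in U}\ell_J(v)$; $J$ is an $r$-edge-cover if $\deg_J(b)\ge r_b$ for all $b\in B$. For $b\in B$, $w_b$ is the $r_b$-th smallest value $c_e^b$ over edges $e\in E$ incident to $b$ (with multiplicity), $w_b=0$ if $r_b=0$. $\Phi(J)=\sum_{b\in B}w_b\max\{r_b-\deg_J(b),0\}$ and $\Phi_0=\Phi(\emptyset)=\sum_{b\in B}w_br_b$. Given $\gamma$ and $\tau$, an edge $e$ incident to $b\in B$ is $\tau$-cheap if $c_e^b\le\gamma\tau\cdot\frac{w_br_b}{\Phi_0}$; $C=\bigcup_{b\in B}\{e\in\delta_E(b): c_e^b\le\gamma\tau\, w_br_b/\Phi_0\}$. *)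

theory Defs
  imports Complex_Main "HOL-Library.Multiset"
begin

(* Bipartite multigraph: edges are identifiers 'e in a finite set E, each edge e
   has endpoint endA e \<in> A and endB e \<in> B (parallel edges allowed).
   Costs: cA e = c_e^a, cB e = c_e^b. *)

definition delta :: "'e set \<Rightarrow> ('e \<Rightarrow> 'v) \<Rightarrow> 'v \<Rightarrow> 'e set" where
  "delta J endp v = {e \<in> J. endp e = v}"

definition deg :: "'e set \<Rightarrow> ('e \<Rightarrow> 'v) \<Rightarrow> 'v \<Rightarrow> nat" where
  "deg J endp v = card (delta J endp v)"

definition ell :: "'e set \<Rightarrow> ('e \<Rightarrow> 'v) \<Rightarrow> ('e \<Rightarrow> real) \<Rightarrow> 'v \<Rightarrow> real" where
  "ell J endp c v = (if delta J endp v = {} then 0 else Max (c ` delta J endp v))"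

definition ell_set :: "'e set \<Rightarrow> ('e \<Rightarrow> 'v) \<Rightarrow> ('e \<Rightarrow> real) \<Rightarrow> 'v set \<Rightarrow> real" where
  "ell_set J endp c U = (\<Sum>v\<in>U. ell J endp c v)"

definition is_edge_cover :: "'e set \<Rightarrow> ('e \<Rightarrow> 'b) \<Rightarrow> 'b set \<Rightarrow> ('b \<Rightarrow> nat) \<Rightarrow> bool" where
  "is_edge_cover J endB B r \<longleftrightarrow> (\<forall>b\<in>B. deg J endB b \<ge> r b)"

(* w_b: the r_b-th smallest value of c_e^b over edges of E incident to b
   (with multiplicity); 0 if r_b = 0 *)
definition wt :: "'e set \<Rightarrow> ('e \<Rightarrow> 'b) \<Rightarrow> ('e \<Rightarrow> real) \<Rightarrow> ('b \<Rightarrow> nat) \<Rightarrow> 'b \<Rightarrow> real" where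
  "wt E endB cB r b = (if r b = 0 then 0
     else sorted_list_of_multiset (image_mset cB (mset_set (delta E endB b))) ! (r b - 1))"

definition Phi :: "'e set \<Rightarrow> ('e \<Rightarrow> 'b) \<Rightarrow> ('e \<Rightarrow> real) \<Rightarrow> 'b set \<Rightarrow> ('b \<Rightarrow> nat) \<Rightarrow> 'e set \<Rightarrow> real" where
  "Phi E endB cB B r J = (\<Sum>b\<in>B. wt E endB cB r b * max (real (r b) - real (deg J endB b)) 0)"

definition Phi0 :: "'e set \<Rightarrow> ('e \<Rightarrow> 'b) \<Rightarrow> ('e \<Rightarrow> real) \<Rightarrow> 'b set \<Rightarrow> ('b \<Rightarrow> nat) \<Rightarrow> real" where
  "Phi0 E endB cB B r = Phi E endB cB B r {}"

definition cheap :: "'e set \<Rightarrow> ('e \<Rightarrow> 'b) \<Rightarrow> ('e \<Rightarrow> real) \<Rightarrow> 'b set \<Rightarrow> ('b \<Rightarrow> nat) \<Rightarrow> real \<Rightarrow> real \<Rightarrow> 'e set" where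
  "cheap E endB cB B r \<gamma> \<tau> = (\<Union>b\<in>B. {e \<in> delta E endB b.
      cB e \<le> \<gamma> * \<tau> * (wt E endB cB r b * real (r b)) / Phi0 E endB cB B r})"

end

theory Submission
  imports Defs
begin

text \<open>Each vertex \<open>b\<close> still deficient in \<open>C \<inter> F\<close> keeps an edge of the cover \<open>F\<close> that is not
  cheap; its cost bounds \<open>\<ell>\<^sub>F(b)\<close> from below, so the potential \<open>w\<^sub>b r\<^sub>b\<close> of \<open>b\<close> is less than
  \<open>\<Phi>\<^sub>0 \<ell>\<^sub>F(b) / (\<gamma>\<tau>)\<close>. Summing over \<open>B\<close> and using \<open>\<ell>\<^sub>F(B) \<le> \<tau>\<close> gives the bound.\<close>

lemma finite_delta: "finite J \<Longrightarrow> finite (delta J endp v)"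
  by (simp add: delta_def)

lemma cost_le_ell:
  assumes "finite J" and "e \<in> J" and "endp e = v"
  shows "c e \<le> ell J endp c v"
proof -
  have "e \<in> delta J endp v" using assms(2,3) by (simp add: delta_def)
  moreover have "finite (delta J endp v)" using assms(1) by (rule finite_delta)
  ultimately show ?thesis by (auto simp: ell_def)
qed

lemma ell_nonneg:
  assumes "finite J" and "\<forall>e\<in>J. c e \<ge> 0"
  shows "ell J endp c v \<ge> 0"
proof (cases "delta J endp v = {}")
  case True
  then show ?thesis by (simp add: ell_def)
next
  case False
  then obtain e where "e \<in> J" and "endp e = v" by (auto simp: delta_def)
  then show ?thesis using assms cost_le_ell[of J e endp v c] by fastforce
qed

lemma deg_less_imp_edge_outside:
  assumes "finite J" and "deg (X \<inter> J) endp v < deg J endp v"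
  shows "\<exists>e\<in>J. e \<notin> X \<and> endp e = v"
proof (rule ccontr)
  assume "\<not> ?thesis"
  then have "delta J endp v \<subseteq> delta (X \<inter> J) endp v" by (auto simp: delta_def)
  moreover have "finite (delta (X \<inter> J) endp v)" using assms(1) by (simp add: finite_delta)
  ultimately show False using assms(2) by (simp add: deg_def card_mono leD)
qed

lemma cost_gt_if_not_cheap:
  assumes "b \<in> B" and "e \<in> E" and "endB e = b" and "e \<notin> cheap E endB cB B r \<gamma> \<tau>"
  shows "\<gamma> * \<tau> * (wt E endB cB r b * real (r b)) / Phi0 E endB cB B r < cB e"
  using assms by (force simp: cheap_def delta_def)

lemma deficit_term_le_ell:
  assumes "finite F" and "F \<subseteq> E" and "\<forall>e\<in>F. cB e \<ge> 0"
    and "Phi0 E endB cB B r > 0" and "\<gamma> * \<tau> > 0"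
    and "is_edge_cover F endB B r" and "b \<in> B"
  shows "wt E endB cB r b * max (real (r b) - real (deg (cheap E endB cB B r \<gamma> \<tau> \<inter> F) endB b)) 0
    \<le> Phi0 E endB cB B r / (\<gamma> * \<tau>) * ell F endB cB b"
    (is "?w * max (_ - real (deg (?C \<inter> F) endB b)) 0 \<le> ?P / ?g * ?l")
proof -
  have rhs_nonneg: "0 \<le> ?P / ?g * ?l"
    using assms(4,5) ell_nonneg[OF assms(1,3), of endB b] by simp
  show ?thesis
  proof (cases "?w < 0 \<or> deg (?C \<inter> F) endB b \<ge> r b")
    case True
    then have "?w * max (real (r b) - real (deg (?C \<inter> F) endB b)) 0 \<le> 0"
      by (auto simp: mult_nonpos_nonneg)
    with rhs_nonneg show ?thesis by linarith
  next
    case False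
    then have w_nonneg: "?w \<ge> 0" and deficient: "deg (?C \<inter> F) endB b < r b" by auto
    moreover have "r b \<le> deg F endB b" using assms(6,7) by (simp add: is_edge_cover_def)
    ultimately obtain e where e: "e \<in> F" "e \<notin> ?C" "endB e = b"
      using deg_less_imp_edge_outside[OF assms(1)] by (meson less_le_trans)
    have "?g * (?w * real (r b)) / ?P < cB e"
      using e assms(2) by (intro cost_gt_if_not_cheap[OF assms(7)]) auto
    moreover have "cB e \<le> ?l" using e by (intro cost_le_ell[OF assms(1)])
    ultimately have "?g * (?w * real (r b)) / ?P < ?l" by linarith
    then have "?w * real (r b) < ?P / ?g * ?l"
      using assms(4,5) by (simp add: field_simps)
    moreover have "?w * max (real (r b) - real (deg (?C \<inter> F) endB b)) 0 \<le> ?w * real (r b)"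
      using w_nonneg by (intro mult_left_mono) auto
    ultimately show ?thesis by linarith
  qed
qed

theorem mainTheorem10:
  fixes A :: "'a set" and B :: "'b set" and E :: "'e set"
    and endA :: "'e \<Rightarrow> 'a" and endB :: "'e \<Rightarrow> 'b"
    and cA cB :: "'e \<Rightarrow> real" and r :: "'b \<Rightarrow> nat"
    and \<gamma> \<tau> :: real and F :: "'e set"
  assumes "finite A" and "finite B" and "finite E"
    and "\<forall>e\<in>E. endA e \<in> A \<and> endB e \<in> B"
    and "\<forall>e\<in>E. cA e \<ge> 0 \<and> cB e \<ge> 0"
    and "Phi0 E endB cB B r > 0"
    and "\<gamma> > 1" and "\<tau> > 0"
    and "F \<subseteq> E" and "is_edge_cover F endB B r"
    and "\<tau> \<ge> ell_set F endB cB B"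
  shows "Phi E endB cB B r (cheap E endB cB B r \<gamma> \<tau> \<inter> F) \<le> Phi0 E endB cB B r / \<gamma>"
proof -
  let ?P = "Phi0 E endB cB B r"
  have finF: "finite F" using assms(3,9) finite_subset by blast
  have costs: "\<forall>e\<in>F. cB e \<ge> 0" using assms(5,9) by auto
  have g: "\<gamma> * \<tau> > 0" using assms(7,8) by simp
  have "Phi E endB cB B r (cheap E endB cB B r \<gamma> \<tau> \<inter> F)
      \<le> (\<Sum>b\<in>B. ?P / (\<gamma> * \<tau>) * ell F endB cB b)"
    unfolding Phi_def
    by (intro sum_mono deficit_term_le_ell[OF finF assms(9) costs assms(6) g assms(10)])
  also have "\<dots> = ?P / (\<gamma> * \<tau>) * ell_set F endB cB B"
    by (simp add: ell_set_def sum_distrib_left)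
  also have "\<dots> \<le> ?P / (\<gamma> * \<tau>) * \<tau>"
    using assms(6,11) g by (intro mult_left_mono) auto
  also have "\<dots> = ?P / \<gamma>" using assms(8) by simp
  finally show ?thesis .
qed

end
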